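(* Let $P(x)=\sum_{I\in\mathcal{I}}a_Ix^I$ be a polynomial in $x=(x_1,\dots,x_n)$, $n\ge2$, with $\mathcal{I}\subset\mathbb{N}^n$ finite containing all $I$ with $|I|\le1$, $a_I>0$ on $\mathcal{I}$, $a_I=1$ for $|I|\le1$, which solves $$\frac{\det\Big[\big(P\,\partial_{\alpha}\partial_{\beta}P-\partial_\alpha P\,\partial_\beta P\big)x_\alpha+P\,\partial_\alpha P\,\delta_{\alpha\beta}\Big]_{1\le\alpha,\beta\le n}}{P^{n-1}}=P^{n}.$$ Then for each $i$ there are $k_i\in\mathbb{Z}^+$ and, for each $j\neq i$, $h_{ij}\in\mathbb{N}$ such that, writing $te_i$ for the point with $i$-th coordinate $t$ and other coordinates $0$, $$P(te_i)=\Big(1+\frac{t}{k_i}\Big)^{k_i},\qquad \partial_jP(te_i)=\Big(1+\frac{t}{k_i}\Big)^{h_{ij}}\ (j\ne i),$$ and moreover $\sum_{\alpha\neq i}h_{i\alpha}=k_i(n-2)+2$ for every $i$, and $\frac{h_{ij}}{k_i}=\frac{h_{ji}}{k_j}$ for all $i\neq j$.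
   Context: $\partial_\alpha=\partial/\partial x_\alpha$, $x^I=\prod_\alpha x_\alpha^{I_\alpha}$, $|I|=\sum_\alpha I_\alpha$. *)

theory Defs
  imports "HOL-Analysis.Analysis"
begin

definition mpoly_eval :: "('n::finite \<Rightarrow> nat) set \<Rightarrow> (('n \<Rightarrow> nat) \<Rightarrow> real) \<Rightarrow> real^'n \<Rightarrow> real" where
  "mpoly_eval S a x = (\<Sum>I\<in>S. a I * (\<Prod>\<alpha>\<in>UNIV. (x$\<alpha>) ^ I \<alpha>))"

definition pd :: "'n::finite \<Rightarrow> (real^'n \<Rightarrow> real) \<Rightarrow> real^'n \<Rightarrow> real" where
  "pd \<alpha> f x = deriv (\<lambda>t. f (\<chi> k. if k = \<alpha> then t else x$k)) (x$\<alpha>)"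

definition mdeg :: "('n::finite \<Rightarrow> nat) \<Rightarrow> nat" where
  "mdeg I = (\<Sum>\<alpha>\<in>UNIV. I \<alpha>)"

end

theory Submission
  imports Defs
    "HOL-Computational_Algebra.Fundamental_Theorem_Algebra"
    "HOL-Computational_Algebra.Polynomial_Factorial"
begin

(*
  On the x_i-axis only the i-th row of the matrix has off-diagonal entries, so the determinant
  is the product of the diagonal.  With f(t) = P(t e_i) and g_j(t) = d_j P(t e_i) the equation
  becomes D(f) * prod_{j ~= i} g_j = f^n, where D(f) = f f' + t (f f'' - f'^2) = f^2 (t f'/f)'.

  Over the complex numbers D(f) vanishes only at roots of f, and at a root of multiplicity m
  (nonzero, as f(0) = 1) it has multiplicity exactly 2m - 2.  Hence D(f) = kappa L^2 with
  L = prod_r (t - r)^(m_r - 1).  Writing f = Q L with Q squarefree and t f' = A L gives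
  D(f) = L^2 (A' Q - A Q'), so A' Q - A Q' is a nonzero constant; differentiating, A'' Q = A Q'',
  so Q'' vanishes at all roots of Q and deg Q <= 1.  Thus f = c (t - r)^k, and f(0) = f'(0) = 1
  force f = (1 + t/k)^k.

  Then D(f) = (1 + t/k)^(2k-2), so prod_j g_j = (1 + t/k)^(k(n-2)+2); every g_j divides a power
  of the prime 1 + t/k and g_j(0) = 1, so g_j = (1 + t/k)^(h_j).  Finally h_ij / k_i is the
  t-coefficient of g_j, which is the coefficient a_(e_i+e_j) of P and hence symmetric.
*)

text \<open>The diagonal entry of the matrix on an axis, as a polynomial in the axis coordinate.
  It equals \<open>F\<^sup>2 (X F'/F)'\<close>, whence the twisted multiplicativity \<open>ma_diag_mult\<close>.\<close>
definition ma_diag :: "'a::idom poly \<Rightarrow> 'a poly" where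
  "ma_diag F = F * pderiv F + [:0, 1:] * (F * pderiv (pderiv F) - pderiv F * pderiv F)"

lemma ma_diag_mult: "ma_diag (U * V) = V * V * ma_diag U + U * U * ma_diag V"
  unfolding ma_diag_def by (simp add: pderiv_mult pderiv_add) (simp add: algebra_simps)

lemma ma_diag_smult: "ma_diag (smult c F) = smult (c * c) (ma_diag F)"
  unfolding ma_diag_def
  by (simp add: pderiv_smult mult_smult_left mult_smult_right smult_diff_right smult_add_right)

lemma ma_diag_linear_power:
  "ma_diag ([:-r, 1:] ^ m) = smult (- of_nat m * r) ([:-r, 1:] ^ (2 * m - 2))"
proof (induction m)
  case 0
  then show ?case by (simp add: ma_diag_def)
next
  case (Suc m)
  let ?p = "[:-r, 1:]"
  have "?p * ?p * ?p ^ (2 * m - 2) = ?p ^ m * ?p ^ m" if "m > 0"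
  proof -
    have "m + m = Suc (Suc (2 * m - 2))" using that by simp
    then show ?thesis by (simp only: power_add[symmetric] power_Suc mult.assoc)
  qed
  then have IH': "?p * ?p * ma_diag (?p ^ m) = smult (- of_nat m * r) (?p ^ m * ?p ^ m)"
    unfolding Suc.IH by (cases "m = 0") simp_all
  have lin: "ma_diag ?p = [:-r:]"
    by (simp add: ma_diag_def pderiv_pCons)
  have comb: "Z * [:-r:] + smult (- of_nat m * r) Z = smult (- of_nat (Suc m) * r) Z" for Z
    by (simp add: algebra_simps flip: smult_add_left)
  have "ma_diag (?p * ?p ^ m) = smult (- of_nat (Suc m) * r) (?p ^ m * ?p ^ m)"
    by (simp only: ma_diag_mult lin IH' comb)
  moreover have "2 * Suc m - 2 = m + m" by simp
  ultimately show ?case by (simp only: power_Suc power_add)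
qed

lemma ma_diag_binomial_power:
  assumes "k \<ge> 1"
  shows "ma_diag ([:1, 1 / of_nat k:] ^ k) = ([:1, 1 / of_nat k:] ^ (2 * k - 2) :: 'a::field_char_0 poly)"
proof -
  have [simp]: "(of_nat k :: 'a) \<noteq> 0"
    using assms by simp
  have p: "[:1, 1 / of_nat k:] = smult (1 / of_nat k) [:- (- of_nat k), 1 :: 'a:]"
    using assms by simp
  have "(1 / of_nat k) ^ k * (1 / of_nat k) ^ k * (- of_nat k * - of_nat k) = (1 / of_nat k :: 'a) ^ (2 * k - 2)"
  proof -
    have "2 * k = (2 * k - 2) + 2"
      using assms by simp
    then have "(1 / of_nat k :: 'a) ^ k * (1 / of_nat k) ^ k = (1 / of_nat k) ^ (2 * k - 2) * (1 / of_nat k) ^ 2"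
      by (metis mult_2 power_add)
    then show ?thesis
      using assms by (simp add: power2_eq_square field_simps)
  qed
  then show ?thesis
    unfolding p smult_power ma_diag_smult ma_diag_linear_power using assms by simp
qed

lemma order_ma_diag:
  fixes F :: "'a::{idom,ring_char_0} poly"
  assumes "F \<noteq> 0" and "poly F r = 0" and "r \<noteq> 0"
  shows "order r (ma_diag F) = 2 * order r F - 2"
proof -
  define m where "m = order r F"
  let ?p = "[:-r, 1:]"
  obtain q where q: "F = ?p ^ m * q" "\<not> ?p dvd q"
    using order_decomp[OF assms(1)] m_def by blast
  have "poly q r \<noteq> 0"
    using q(2) poly_eq_0_iff_dvd by blast
  have "m \<ge> 1"
    using assms(1,2) order_root[of F r] m_def by (simp add: Suc_le_eq)
  have pw: "?p ^ m * ?p ^ m = ?p ^ (2 * m - 2) * (?p * ?p)"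
  proof -
    have "m + m = Suc (Suc (2 * m - 2))" using \<open>m \<ge> 1\<close> by simp
    then show ?thesis by (simp only: power_add[symmetric] power_Suc ac_simps)
  qed
  define E where "E = smult (- of_nat m * r) (q * q) + ?p * ?p * ma_diag q"
  have D: "ma_diag F = ?p ^ (2 * m - 2) * E"
    unfolding q(1) ma_diag_mult ma_diag_linear_power E_def distrib_left pw
    by (simp only: mult_smult_left mult_smult_right ac_simps)
  have "poly E r \<noteq> 0"
    using \<open>poly q r \<noteq> 0\<close> \<open>m \<ge> 1\<close> assms(3) by (simp add: E_def)
  then have "order r (?p ^ (2 * m - 2) * E) = 2 * m - 2"
    by (subst order_mult) (auto simp: order_power_n_n order_0I)
  then show ?thesis
    using D m_def by simp
qed

lemma ma_diag_factor:
  fixes F Q L A :: "'a::idom poly"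
  assumes F: "F = Q * L" and XF': "[:0, 1:] * pderiv F = A * L"
  shows "ma_diag F = L * L * (pderiv A * Q - A * pderiv Q)"
proof -
  have F'': "pderiv F + [:0, 1:] * pderiv (pderiv F) = pderiv A * L + A * pderiv L"
    using arg_cong[OF XF', of pderiv] by (simp add: pderiv_mult pderiv_pCons)
  have F': "pderiv F = pderiv Q * L + Q * pderiv L"
    using F by (simp add: pderiv_mult)
  have "ma_diag F = F * (pderiv F + [:0, 1:] * pderiv (pderiv F)) - [:0, 1:] * pderiv F * pderiv F"
    by (simp add: ma_diag_def algebra_simps)
  also have "\<dots> = Q * L * (pderiv A * L + A * pderiv L) - A * L * (pderiv Q * L + Q * pderiv L)"
    by (simp only: F'' XF') (simp only: F' flip: F)
  also have "\<dots> = L * L * (pderiv A * Q - A * pderiv Q)"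
    by (simp add: algebra_simps)
  finally show ?thesis .
qed

section \<open>Roots, multiplicities and factors of polynomials\<close>

lemma order_prod_linear_powers:
  fixes e :: "'a::idom \<Rightarrow> nat"
  assumes "finite R"
  shows "order z (\<Prod>r\<in>R. [:-r, 1:] ^ e r) = (if z \<in> R then e z else 0)"
  using assms
proof (induction R rule: finite_induct)
  case (insert r R)
  have "order z ([:-r, 1:] ^ e r) = (if z = r then e r else 0)"
    by (auto simp: order_power_n_n poly_power intro: order_0I)
  with insert show ?case
    by (auto simp: order_mult prod_zero_iff)
qed simp

lemma prod_linear_powers_dvd:
  fixes e :: "'a::idom \<Rightarrow> nat"
  assumes "finite R" and "p \<noteq> 0" and "\<And>r. r \<in> R \<Longrightarrow> e r \<le> order r p"
  shows "(\<Prod>r\<in>R. [:-r, 1:] ^ e r) dvd p"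
  using assms
proof (induction R arbitrary: p rule: finite_induct)
  case (insert r R)
  obtain p' where p': "p = [:-r, 1:] ^ e r * p'"
    using insert.prems by (meson dvdE insertI1 order_divides)
  have "p' \<noteq> 0"
    using p' insert.prems(1) by auto
  have "e s \<le> order s p'" if "s \<in> R" for s
  proof -
    have "order s ([:-r, 1:] ^ e r) = 0"
      using that insert.hyps(2) by (auto simp: poly_power intro: order_0I)
    moreover have "order s p = order s ([:-r, 1:] ^ e r) + order s p'"
      using p' insert.prems(1) by (simp add: order_mult)
    ultimately show ?thesis
      using insert.prems(2)[of s] that by simp
  qed
  then have "(\<Prod>r\<in>R. [:-r, 1:] ^ e r) dvd p'"
    using insert.IH \<open>p' \<noteq> 0\<close> by blast
  then show ?case
    using insert.hyps p' by (simp add: mult_dvd_mono)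
qed simp

lemma prod_root_powers_dvd_pderiv:
  fixes F :: "'a::{idom,ring_char_0} poly"
  assumes "F \<noteq> 0" and "pderiv F \<noteq> 0"
  shows "(\<Prod>r\<in>{z. poly F z = 0}. [:-r, 1:] ^ (order r F - 1)) dvd pderiv F"
  using assms by (intro prod_linear_powers_dvd poly_roots_finite) (auto simp: order_pderiv)

lemma complex_poly_eq_radical_mult:
  fixes F :: "complex poly"
  assumes "F \<noteq> 0"
  shows "F = smult (lead_coeff F) (\<Prod>r\<in>{z. poly F z = 0}. [:-r, 1:])
    * (\<Prod>r\<in>{z. poly F z = 0}. [:-r, 1:] ^ (order r F - 1))"
proof -
  have "(\<Prod>r\<in>{z. poly F z = 0}. [:-r, 1:] ^ order r F)
      = (\<Prod>r\<in>{z. poly F z = 0}. [:-r, 1:] * [:-r, 1:] ^ (order r F - 1))"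
  proof (rule prod.cong)
    fix r
    assume "r \<in> {z. poly F z = 0}"
    then have "order r F = Suc (order r F - 1)"
      using order_root[of F r] assms by simp
    then show "[:-r, 1:] ^ order r F = [:-r, 1:] * [:-r, 1:] ^ (order r F - 1)"
      by (metis power_Suc)
  qed simp
  then show ?thesis
    using complex_poly_decompose[of F] by (simp only: prod.distrib mult_smult_left)
qed

lemma pderiv2_root_if_wronskian_const:
  fixes A Q :: "'a::idom poly"
  assumes W: "pderiv A * Q - A * pderiv Q = [:\<kappa>:]" and "\<kappa> \<noteq> 0" and "poly Q r = 0"
  shows "poly (pderiv (pderiv Q)) r = 0"
proof -
  have "pderiv (pderiv A * Q - A * pderiv Q) = 0"
    unfolding W by (simp add: pderiv_pCons)
  then have "pderiv (pderiv A) * Q = A * pderiv (pderiv Q)"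
    by (simp add: pderiv_mult pderiv_diff algebra_simps)
  then have "poly A r * poly (pderiv (pderiv Q)) r = 0"
    using \<open>poly Q r = 0\<close> by (metis mult_zero_right poly_mult)
  moreover have "poly A r \<noteq> 0"
    using arg_cong[OF W, of "\<lambda>p. poly p r"] \<open>\<kappa> \<noteq> 0\<close> \<open>poly Q r = 0\<close> by auto
  ultimately show ?thesis by simp
qed

lemma card_less_degree_if_pderiv2_vanishes:
  fixes Q :: "'a::{idom,ring_char_0} poly"
  assumes "degree Q \<ge> 2" and "\<forall>x\<in>R. poly (pderiv (pderiv Q)) x = 0"
  shows "card R < degree Q"
proof -
  have Q'': "pderiv (pderiv Q) \<noteq> 0"
    using assms(1) by (simp add: pderiv_eq_0_iff degree_pderiv)
  have "card R \<le> card {x. poly (pderiv (pderiv Q)) x = 0}"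
    using assms(2) by (intro card_mono poly_roots_finite[OF Q'']) auto
  also have "\<dots> \<le> degree (pderiv (pderiv Q))"
    by (rule card_poly_roots_bound[OF Q''])
  finally show ?thesis
    using assms(1) by (simp add: degree_pderiv)
qed

lemma binomial_if_normalized_linear_power:
  fixes F :: "'a::field_char_0 poly"
  assumes F: "F = smult c ([:-r, 1:] ^ k)" and F0: "poly F 0 = 1" and F'0: "poly (pderiv F) 0 = 1"
  shows "k \<ge> 1 \<and> F = [:1, 1 / of_nat k:] ^ k"
proof -
  have "k \<noteq> 0"
    using F'0 by (cases k) (auto simp: F pderiv_smult)
  then obtain j where k: "k = Suc j"
    using not0_implies_Suc by blast
  have [simp]: "(of_nat k :: 'a) \<noteq> 0"
    using \<open>k \<noteq> 0\<close> by simp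
  define u where "u = c * (-r) ^ j"
  have "poly (pderiv F) 0 = c * (of_nat k * (-r) ^ (k - 1))"
    by (simp add: F pderiv_smult pderiv_power pderiv_pCons poly_power)
  then have "u * of_nat k = 1"
    using F'0 by (simp add: k u_def ac_simps)
  moreover have "u * (-r) = 1"
    using F0 by (simp add: F k u_def poly_power ac_simps)
  ultimately have r: "-r = of_nat k"
    by (metis mult_left_cancel mult_not_zero one_neq_zero)
  then have "c = (1 / of_nat k) ^ k"
    using F0 \<open>k \<noteq> 0\<close> by (simp add: F poly_power power_divide field_simps)
  then have "F = smult ((1 / of_nat k) ^ k) ([:of_nat k, 1:] ^ k)"
    using r by (simp add: F flip: minus_equation_iff)
  also have "\<dots> = (smult (1 / of_nat k) [:of_nat k, 1:]) ^ k"
    by (rule smult_power[symmetric])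
  also have "smult (1 / of_nat k) [:of_nat k, 1:] = [:1, 1 / of_nat k :: 'a:]"
    using \<open>k \<noteq> 0\<close> by simp
  finally show ?thesis
    using \<open>k \<noteq> 0\<close> by simp
qed

lemma smult_power_if_dvd_prime_elem_power:
  fixes p g :: "'a::field poly"
  assumes "prime_elem p" and "g dvd p ^ n"
  shows "\<exists>c m. g = smult c (p ^ m)"
  using assms(2)
proof (induction n arbitrary: g)
  case 0
  then obtain c where "g = [:c:]"
    by (auto simp: is_unit_poly_iff)
  then have "g = smult c (p ^ 0)"
    by simp
  then show ?case by blast
next
  case (Suc n)
  have "p \<noteq> 0"
    using assms(1) by (rule prime_elem_not_zeroI)
  show ?case
  proof (cases "p dvd g")
    case True
    then obtain g' where g': "g = p * g'"
      by (elim dvdE)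
    then have "g' dvd p ^ n"
      using Suc.prems \<open>p \<noteq> 0\<close> by simp
    then obtain c m where "g' = smult c (p ^ m)"
      using Suc.IH by blast
    then have "g = smult c (p ^ Suc m)"
      using g' by (simp add: mult_smult_right)
    then show ?thesis by blast
  next
    case False
    from Suc.prems obtain q where q: "p * p ^ n = g * q"
      by (auto elim: dvdE)
    then have "p dvd q"
      using False assms(1) by (metis dvd_triv_left prime_elem_dvd_mult_iff)
    then obtain q' where "q = p * q'"
      by (elim dvdE)
    with q \<open>p \<noteq> 0\<close> have "p ^ n = g * q'"
      by (simp add: ac_simps)
    then show ?thesis
      using Suc.IH dvdI by blast
  qed
qed

lemma powers_if_prod_eq_prime_elem_power:
  fixes p :: "'a::field poly" and g :: "'j \<Rightarrow> 'a poly"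
  assumes p: "prime_elem p" "poly p 0 = 1" and "finite J"
    and g0: "\<And>j. j \<in> J \<Longrightarrow> poly (g j) 0 = 1" and prod: "(\<Prod>j\<in>J. g j) = p ^ M"
  obtains h where "\<And>j. j \<in> J \<Longrightarrow> g j = p ^ h j" and "(\<Sum>j\<in>J. h j) = M"
proof -
  have "\<exists>m. g j = p ^ m" if "j \<in> J" for j
  proof -
    have "g j dvd p ^ M"
      unfolding prod[symmetric] using \<open>finite J\<close> that by (rule dvd_prodI)
    then obtain c m where gj: "g j = smult c (p ^ m)"
      using smult_power_if_dvd_prime_elem_power[OF p(1)] by blast
    then have "c = 1"
      using g0[OF that] p(2) by (simp add: poly_power)
    with gj show ?thesis
      by auto
  qed
  then obtain h where h: "\<And>j. j \<in> J \<Longrightarrow> g j = p ^ h j"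
    by metis
  have "p ^ (\<Sum>j\<in>J. h j) = p ^ M"
    using prod h by (simp add: power_sum)
  moreover have "p \<noteq> 0" and "degree p \<noteq> 0"
    using p(1) by (auto simp: prime_elem_def is_unit_iff_degree)
  ultimately have "(\<Sum>j\<in>J. h j) = M"
    by (metis degree_power_eq mult_right_cancel)
  with h show ?thesis
    using that by blast
qed

lemma coeff_1_linear_power: "coeff ([:1, c:] ^ h) 1 = of_nat h * (c :: 'a::comm_ring_1)"
  by (induction h) (simp_all add: coeff_0_power algebra_simps)

lemma poly_eqI_off_roots:
  fixes p q f :: "'a::{idom,ring_char_0} poly"
  assumes "f \<noteq> 0" and "\<And>t. poly f t \<noteq> 0 \<Longrightarrow> poly p t = poly q t"
  shows "p = q"
proof (rule ccontr)
  assume "p \<noteq> q"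
  then have "finite {t. poly (p - q) t = 0}"
    by (intro poly_roots_finite) simp
  then have "finite ({t. poly (p - q) t = 0} \<union> {t. poly f t = 0})"
    using poly_roots_finite[OF assms(1)] by blast
  moreover have "UNIV \<subseteq> {t. poly (p - q) t = 0} \<union> {t. poly f t = 0}"
    using assms(2) by auto
  ultimately show False
    using infinite_UNIV_char_0 finite_subset by blast
qed

section \<open>Polynomials \<open>f\<close> with \<open>ma_diag f\<close> dividing a power of \<open>f\<close>\<close>

lemma ma_diag_eq_smult_prod_if_dvd_power:
  fixes F :: "complex poly"
  assumes F0: "poly F 0 \<noteq> 0" and D: "ma_diag F \<noteq> 0" and dvd: "ma_diag F dvd F ^ N"
  obtains \<kappa> where "\<kappa> \<noteq> 0"
    and "ma_diag F = smult \<kappa> (\<Prod>r\<in>{z. poly F z = 0}. [:-r, 1:] ^ (2 * order r F - 2))"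
proof -
  define R where "R = {z. poly F z = 0}"
  define M where "M = (\<Prod>r\<in>R. [:-r, 1:] ^ (2 * order r F - 2))"
  have "F \<noteq> 0" and "0 \<notin> R"
    using F0 by (auto simp: R_def)
  have "finite R"
    using poly_roots_finite[OF \<open>F \<noteq> 0\<close>] by (simp add: R_def)
  have ord: "order r (ma_diag F) = 2 * order r F - 2" if "r \<in> R" for r
    using order_ma_diag[OF \<open>F \<noteq> 0\<close>] that \<open>0 \<notin> R\<close> R_def by fastforce
  have "M dvd ma_diag F"
    unfolding M_def by (rule prod_linear_powers_dvd[OF \<open>finite R\<close> D]) (simp add: ord)
  then obtain W where W: "ma_diag F = M * W"
    by (elim dvdE)
  have "poly W z \<noteq> 0" for z
  proof
    assume "poly W z = 0"
    then have "poly (ma_diag F) z = 0"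
      using W by simp
    moreover obtain G where "F ^ N = ma_diag F * G"
      using dvd by (elim dvdE)
    ultimately have "poly F z ^ N = 0"
      by (metis mult_zero_left poly_mult poly_power)
    then have "z \<in> R"
      by (simp add: R_def)
    then have "order z W = 0"
      using D W ord[of z] \<open>finite R\<close> by (simp add: order_mult M_def order_prod_linear_powers)
    with \<open>poly W z = 0\<close> show False
      using D W order_root[of W z] by auto
  qed
  then have "degree W = 0"
    using fundamental_theorem_of_algebra constant_degree by blast
  then obtain \<kappa> where "W = [:\<kappa>:]"
    by (elim degree_eq_zeroE)
  with W D show ?thesis
    using that by (auto simp: M_def R_def)
qed

lemma card_roots_le_1_if_ma_diag_dvd_power:
  fixes F :: "complex poly"
  assumes F0: "poly F 0 \<noteq> 0" and F'0: "poly (pderiv F) 0 \<noteq> 0" and dvd: "ma_diag F dvd F ^ N"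
  shows "card {z. poly F z = 0} \<le> 1"
proof -
  define R where "R = {z. poly F z = 0}"
  define L where "L = (\<Prod>r\<in>R. [:-r, 1:] ^ (order r F - 1))"
  define Q where "Q = smult (lead_coeff F) (\<Prod>r\<in>R. [:-r, 1:])"
  have "F \<noteq> 0" and "pderiv F \<noteq> 0" and "ma_diag F \<noteq> 0"
    using F0 F'0 by (auto simp: ma_diag_def dest: arg_cong[of _ _ "\<lambda>p. poly p 0"])
  have FQL: "F = Q * L"
    using complex_poly_eq_radical_mult[OF \<open>F \<noteq> 0\<close>] by (simp add: Q_def L_def R_def)
  obtain A0 where A0: "pderiv F = L * A0"
    using prod_root_powers_dvd_pderiv[OF \<open>F \<noteq> 0\<close> \<open>pderiv F \<noteq> 0\<close>] by (auto simp: L_def R_def)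
  define A where "A = [:0, 1:] * A0"
  obtain \<kappa> where "\<kappa> \<noteq> 0" and D: "ma_diag F = smult \<kappa> (\<Prod>r\<in>R. [:-r, 1:] ^ (2 * order r F - 2))"
    using ma_diag_eq_smult_prod_if_dvd_power[OF F0 \<open>ma_diag F \<noteq> 0\<close> dvd] R_def by blast
  have "2 * m - 2 = (m - 1) + (m - 1)" for m :: nat
    by simp
  then have "(\<Prod>r\<in>R. [:-r, 1:] ^ (2 * order r F - 2)) = L * L"
    unfolding L_def prod.distrib[symmetric] power_add[symmetric] by simp
  moreover have "ma_diag F = L * L * (pderiv A * Q - A * pderiv Q)"
    by (rule ma_diag_factor[OF FQL]) (simp add: A_def A0 ac_simps)
  ultimately have "L * L * (pderiv A * Q - A * pderiv Q) = L * L * [:\<kappa>:]"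
    using D by simp
  moreover have "L * L \<noteq> 0"
    using FQL \<open>F \<noteq> 0\<close> by simp
  ultimately have W: "pderiv A * Q - A * pderiv Q = [:\<kappa>:]"
    by (metis mult_left_cancel)
  have "finite R"
    using poly_roots_finite[OF \<open>F \<noteq> 0\<close>] by (simp add: R_def)
  then have "poly Q r = 0" if "r \<in> R" for r
    using that by (auto simp: Q_def poly_prod prod_zero_iff)
  then have Q'': "\<forall>r\<in>R. poly (pderiv (pderiv Q)) r = 0"
    using pderiv2_root_if_wronskian_const[OF W \<open>\<kappa> \<noteq> 0\<close>] by blast
  have "degree Q = card R"
    using \<open>F \<noteq> 0\<close> by (simp add: Q_def degree_prod_eq_sum_degree)
  then show ?thesis
    using card_less_degree_if_pderiv2_vanishes[OF _ Q''] R_def by fastforce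
qed

lemma binomial_power_if_ma_diag_dvd_power:
  fixes F :: "complex poly"
  assumes F0: "poly F 0 = 1" and F'0: "poly (pderiv F) 0 = 1" and dvd: "ma_diag F dvd F ^ N"
  shows "degree F \<ge> 1 \<and> F = [:1, 1 / of_nat (degree F):] ^ degree F"
proof -
  define R where "R = {z. poly F z = 0}"
  have "F \<noteq> 0" and "degree F \<noteq> 0"
    using F0 F'0 by (auto simp flip: pderiv_eq_0_iff)
  have "finite R"
    using poly_roots_finite[OF \<open>F \<noteq> 0\<close>] by (simp add: R_def)
  moreover have "R \<noteq> {}"
    using fundamental_theorem_of_algebra[of F] \<open>degree F \<noteq> 0\<close> by (auto simp: constant_degree R_def)
  ultimately have "card R \<noteq> 0"
    by simp
  moreover have "card R \<le> 1"
    using card_roots_le_1_if_ma_diag_dvd_power[OF _ _ dvd] F0 F'0 by (simp add: R_def)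
  ultimately have "card R = 1"
    by linarith
  then obtain r where "R = {r}"
    by (rule card_1_singletonE)
  then have F: "F = smult (lead_coeff F) ([:-r, 1:] ^ order r F)"
    using complex_poly_decompose[of F] by (simp add: R_def)
  have "degree F = degree (smult (lead_coeff F) ([:-r, 1:] ^ order r F))"
    using F by (rule arg_cong)
  then have "degree F = order r F"
    using \<open>F \<noteq> 0\<close> by (simp add: degree_linear_power)
  then show ?thesis
    using binomial_if_normalized_linear_power[OF F F0 F'0] by simp
qed

lemma map_poly_of_real_add: "map_poly complex_of_real (p + q) = map_poly of_real p + map_poly of_real q"
  by (rule poly_eqI) (simp add: coeff_map_poly)

lemma map_poly_of_real_diff: "map_poly complex_of_real (p - q) = map_poly of_real p - map_poly of_real q"
  by (rule poly_eqI) (simp add: coeff_map_poly)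

lemma map_poly_of_real_mult: "map_poly complex_of_real (p * q) = map_poly of_real p * map_poly of_real q"
  by (rule poly_eqI) (simp add: coeff_map_poly coeff_mult)

lemma map_poly_of_real_power: "map_poly complex_of_real (p ^ n) = map_poly of_real p ^ n"
  by (induction n) (simp_all add: map_poly_of_real_mult)

lemma map_poly_of_real_pderiv: "map_poly complex_of_real (pderiv p) = pderiv (map_poly of_real p)"
  by (rule poly_eqI) (simp add: coeff_map_poly coeff_pderiv)

lemma map_poly_of_real_ma_diag: "map_poly complex_of_real (ma_diag p) = ma_diag (map_poly of_real p)"
  unfolding ma_diag_def
  by (simp add: map_poly_of_real_add map_poly_of_real_diff map_poly_of_real_mult
      map_poly_of_real_pderiv map_poly_pCons)

lemma poly_map_poly_of_real_0: "poly (map_poly complex_of_real p) 0 = of_real (poly p 0)"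
  by (simp add: poly_0_coeff_0 coeff_map_poly)

lemma map_poly_of_real_inject: "map_poly complex_of_real p = map_poly of_real q \<longleftrightarrow> p = q"
  by (metis coeff_map_poly of_real_0 of_real_eq_iff poly_eqI)

lemma binomial_power_if_ma_diag_mult_eq_power:
  fixes f G :: "real poly"
  assumes f0: "poly f 0 = 1" and f'0: "poly (pderiv f) 0 = 1" and eq: "ma_diag f * G = f ^ N"
  shows "degree f \<ge> 1 \<and> f = [:1, 1 / real (degree f):] ^ degree f"
proof -
  let ?F = "map_poly complex_of_real f"
  have "ma_diag ?F * map_poly of_real G = ?F ^ N"
    using arg_cong[OF eq, of "map_poly complex_of_real"]
    by (simp add: map_poly_of_real_mult map_poly_of_real_power map_poly_of_real_ma_diag)
  then have "ma_diag ?F dvd ?F ^ N"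
    by (metis dvd_triv_left)
  moreover have "poly ?F 0 = 1" and "poly (pderiv ?F) 0 = 1"
    using f0 f'0 by (simp_all add: poly_map_poly_of_real_0 flip: map_poly_of_real_pderiv)
  ultimately have "degree ?F \<ge> 1 \<and> ?F = [:1, 1 / of_nat (degree ?F):] ^ degree ?F"
    using binomial_power_if_ma_diag_dvd_power by blast
  moreover have "[:1, 1 / of_nat k:] ^ k = map_poly complex_of_real ([:1, 1 / real k:] ^ k)" for k
    by (simp add: map_poly_of_real_power map_poly_pCons)
  ultimately show ?thesis
    by (metis degree_map_poly map_poly_of_real_inject of_real_eq_0_iff)
qed

lemma binomial_powers_if_ma_diag_mult_prod_eq_power:
  fixes f :: "real poly" and g :: "'j \<Rightarrow> real poly"
  assumes J: "finite J" "J \<noteq> {}" and f0: "poly f 0 = 1" and f'0: "poly (pderiv f) 0 = 1"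
    and g0: "\<And>j. j \<in> J \<Longrightarrow> poly (g j) 0 = 1"
    and eq: "ma_diag f * (\<Prod>j\<in>J. g j) = f ^ Suc (card J)"
  obtains k h where "k > 0" and "f = [:1, 1 / real k:] ^ k"
    and "\<And>j. j \<in> J \<Longrightarrow> g j = [:1, 1 / real k:] ^ h j"
    and "(\<Sum>j\<in>J. h j) = k * (card J - 1) + 2"
proof -
  define k where "k = degree f"
  define p where "p = [:1, 1 / real k:]"
  define M where "M = k * (card J - 1) + 2"
  have "k \<ge> 1" and f: "f = p ^ k"
    using binomial_power_if_ma_diag_mult_eq_power[OF f0 f'0 eq] by (simp_all add: k_def p_def)
  have "card J \<ge> 1"
    using J by (simp add: Suc_le_eq card_gt_0_iff)
  then have "k * 1 \<le> k * card J"
    by (rule mult_le_mono2)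
  moreover have "k * (card J - 1) = k * card J - k" and "k * Suc (card J) = k + k * card J"
    by (simp_all add: diff_mult_distrib2)
  ultimately have kM: "k * Suc (card J) = (2 * k - 2) + M"
    using \<open>k \<ge> 1\<close> unfolding M_def by linarith
  have "p ^ (2 * k - 2) * (\<Prod>j\<in>J. g j) = ma_diag f * (\<Prod>j\<in>J. g j)"
    using \<open>k \<ge> 1\<close> by (simp add: f p_def ma_diag_binomial_power)
  also have "\<dots> = (p ^ k) ^ Suc (card J)"
    using eq by (simp add: f)
  also have "\<dots> = p ^ (2 * k - 2) * p ^ M"
    by (simp only: power_mult[symmetric] kM power_add)
  finally have "(\<Prod>j\<in>J. g j) = p ^ M"
    by (simp add: p_def)
  moreover have "prime_elem p" and "poly p 0 = 1"
    unfolding p_def using \<open>k \<ge> 1\<close> by (simp_all add: prime_elem_linear_field_poly)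
  ultimately obtain h where "\<And>j. j \<in> J \<Longrightarrow> g j = p ^ h j" and "(\<Sum>j\<in>J. h j) = M"
    using powers_if_prod_eq_prime_elem_power J(1) g0 by metis
  then show ?thesis
    using that[of k h] \<open>k \<ge> 1\<close> f by (simp add: p_def M_def)
qed

section \<open>Restriction of \<open>P\<close> to the coordinate axes\<close>

definition line_poly :: "('n::finite \<Rightarrow> nat) set \<Rightarrow> (('n \<Rightarrow> nat) \<Rightarrow> real) \<Rightarrow> 'n \<Rightarrow> real^'n \<Rightarrow> real poly"
  where "line_poly S a j x = (\<Sum>I\<in>S. monom (a I * (\<Prod>\<alpha>\<in>UNIV - {j}. (x$\<alpha>) ^ I \<alpha>)) (I j))"

lemma poly_line_poly: "poly (line_poly S a j x) s = mpoly_eval S a (\<chi> k. if k = j then s else x$k)"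
  unfolding mpoly_eval_def line_poly_def poly_sum poly_monom
proof (rule sum.cong[OF refl])
  fix I
  have "(\<Prod>\<alpha>\<in>UNIV. (\<chi> k. if k = j then s else x$k) $ \<alpha> ^ I \<alpha>)
      = s ^ I j * (\<Prod>\<alpha>\<in>UNIV - {j}. x $ \<alpha> ^ I \<alpha>)"
    by (subst prod.remove[of _ j]) (auto intro!: prod.cong)
  then show "a I * (\<Prod>\<alpha>\<in>UNIV - {j}. x $ \<alpha> ^ I \<alpha>) * s ^ I j
      = a I * (\<Prod>\<alpha>\<in>UNIV. (\<chi> k. if k = j then s else x$k) $ \<alpha> ^ I \<alpha>)"
    by simp
qed

lemma line_poly_upd: "line_poly S a j (\<chi> k. if k = j then s else x$k) = line_poly S a j x"
  unfolding line_poly_def by (auto intro!: sum.cong prod.cong arg_cong2[where f = monom])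

lemma pd_mpoly_eval: "pd j (mpoly_eval S a) x = poly (pderiv (line_poly S a j x)) (x$j)"
proof -
  have "(\<lambda>t. mpoly_eval S a (\<chi> k. if k = j then t else x$k)) = poly (line_poly S a j x)"
    by (rule ext) (simp add: poly_line_poly)
  then show ?thesis
    unfolding pd_def by (simp add: DERIV_imp_deriv[OF poly_DERIV])
qed

lemma pd_pd_mpoly_eval: "pd j (pd j (mpoly_eval S a)) x = poly (pderiv (pderiv (line_poly S a j x))) (x$j)"
proof -
  have "(\<lambda>t. pd j (mpoly_eval S a) (\<chi> k. if k = j then t else x$k)) = poly (pderiv (line_poly S a j x))"
    by (simp add: pd_mpoly_eval line_poly_upd)
  then show ?thesis
    unfolding pd_def[of j "pd j (mpoly_eval S a)"] by (simp add: DERIV_imp_deriv[OF poly_DERIV])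
qed

text \<open>Viewing \<open>P\<close> as a polynomial in the variables other than \<open>x\<^sub>i\<close> with coefficients in
  \<open>\<real>[x\<^sub>i]\<close>, the coefficient of \<open>x\<^sup>J\<close> (the entry \<open>J i\<close> is ignored).\<close>
definition var_coeff :: "('n::finite \<Rightarrow> nat) set \<Rightarrow> (('n \<Rightarrow> nat) \<Rightarrow> real) \<Rightarrow> 'n \<Rightarrow> ('n \<Rightarrow> nat) \<Rightarrow> real poly"
  where "var_coeff S a i J = (\<Sum>I\<in>S. if \<forall>\<alpha>. \<alpha> \<noteq> i \<longrightarrow> I \<alpha> = J \<alpha> then monom (a I) (I i) else 0)"

lemma coeff_var_coeff:
  assumes "finite S"
  shows "coeff (var_coeff S a i J) m = (if J(i := m) \<in> S then a (J(i := m)) else 0)"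
proof -
  have "(\<forall>\<alpha>. \<alpha> \<noteq> i \<longrightarrow> I \<alpha> = J \<alpha>) \<and> I i = m \<longleftrightarrow> I = J(i := m)" for I :: "'a \<Rightarrow> nat"
    by (auto simp: fun_eq_iff)
  then have "coeff (var_coeff S a i J) m = (\<Sum>I\<in>S. if I = J(i := m) then a I else 0)"
    unfolding var_coeff_def coeff_sum by (intro sum.cong) (auto simp: coeff_monom)
  then show ?thesis
    using assms by (simp add: sum.delta')
qed

lemma coeff_1_var_coeff_sym:
  assumes "finite S" and "i \<noteq> j"
  shows "coeff (var_coeff S a i ((\<lambda>_. 0)(j := 1))) 1 = coeff (var_coeff S a j ((\<lambda>_. 0)(i := 1))) 1"
  using assms by (simp add: coeff_var_coeff fun_upd_twist)

lemma mdeg_single: "mdeg ((\<lambda>_. 0)(j := m)) = m"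
  by (simp add: mdeg_def fun_upd_def)

lemma prod_zero_power: "finite A \<Longrightarrow> (\<Prod>\<alpha>\<in>A. (0::real) ^ I \<alpha>) = (if \<forall>\<alpha>\<in>A. I \<alpha> = 0 then 1 else 0)"
  by (induction A rule: finite_induct) auto

lemma axis_eq_upd: "axis i t = (\<chi> k. if k = i then t else (0 :: real^'n::finite) $ k)"
  by (simp add: axis_def vec_eq_iff)

lemma line_poly_origin: "line_poly S a i 0 = var_coeff S a i (\<lambda>_. 0)"
  unfolding line_poly_def var_coeff_def by (intro sum.cong) (auto simp: prod_zero_power)

lemma mpoly_eval_axis: "mpoly_eval S a (axis i t) = poly (var_coeff S a i (\<lambda>_. 0)) t"
  by (simp add: axis_eq_upd poly_line_poly flip: line_poly_origin)

lemma pd_mpoly_eval_axis: "pd i (mpoly_eval S a) (axis i t) = poly (pderiv (var_coeff S a i (\<lambda>_. 0))) t"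
  unfolding pd_mpoly_eval axis_eq_upd line_poly_upd by (simp add: line_poly_origin)

lemma pd_pd_mpoly_eval_axis:
  "pd i (pd i (mpoly_eval S a)) (axis i t) = poly (pderiv (pderiv (var_coeff S a i (\<lambda>_. 0)))) t"
  unfolding pd_pd_mpoly_eval axis_eq_upd line_poly_upd by (simp add: line_poly_origin)

lemma pd_mpoly_eval_axis_other:
  assumes "j \<noteq> i"
  shows "pd j (mpoly_eval S a) (axis i t) = poly (var_coeff S a i ((\<lambda>_. 0)(j := 1))) t"
proof -
  have "pd j (mpoly_eval S a) (axis i t) = coeff (line_poly S a j (axis i t)) 1"
    using assms by (simp add: pd_mpoly_eval axis_def poly_0_coeff_0 coeff_pderiv)
  also have "\<dots> = (\<Sum>I\<in>S. if I j = 1 then a I * (\<Prod>\<alpha>\<in>UNIV - {j}. (axis i t $ \<alpha>) ^ I \<alpha>) else 0)"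
    unfolding line_poly_def coeff_sum coeff_monom by (rule sum.cong) auto
  also have "\<dots> = poly (var_coeff S a i ((\<lambda>_. 0)(j := 1))) t"
    unfolding var_coeff_def poly_sum
  proof (rule sum.cong[OF refl])
    fix I :: "'a \<Rightarrow> nat"
    have "(\<Prod>\<alpha>\<in>UNIV - {j}. (axis i t $ \<alpha>) ^ I \<alpha>) = t ^ I i * (\<Prod>\<alpha>\<in>UNIV - {i, j}. (0::real) ^ I \<alpha>)"
      using assms by (subst prod.remove[of _ i]) (auto simp: axis_def intro!: prod.cong)
    moreover have "(\<forall>\<alpha>. \<alpha> \<noteq> i \<longrightarrow> I \<alpha> = ((\<lambda>_. 0)(j := 1)) \<alpha>) \<longleftrightarrow> I j = 1 \<and> (\<forall>\<alpha>\<in>UNIV - {i, j}. I \<alpha> = 0)"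
      using assms by auto
    ultimately show "(if I j = 1 then a I * (\<Prod>\<alpha>\<in>UNIV - {j}. (axis i t $ \<alpha>) ^ I \<alpha>) else 0)
        = poly (if \<forall>\<alpha>. \<alpha> \<noteq> i \<longrightarrow> I \<alpha> = ((\<lambda>_. 0)(j := 1)) \<alpha> then monom (a I) (I i) else 0) t"
      by (simp add: prod_zero_power poly_monom)
  qed
  finally show ?thesis .
qed

lemma det_eq_prod_diag_if_offdiag_in_row:
  fixes A :: "'a::comm_ring_1^'n::finite^'n"
  assumes offdiag: "\<And>\<alpha> \<beta>. \<alpha> \<noteq> i \<Longrightarrow> \<alpha> \<noteq> \<beta> \<Longrightarrow> A$\<alpha>$\<beta> = 0"
  shows "det A = (\<Prod>\<alpha>\<in>UNIV. A$\<alpha>$\<alpha>)"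
proof -
  have "(\<Prod>\<alpha>\<in>UNIV. A$\<alpha>$p \<alpha>) = 0" if p: "p permutes UNIV" "p \<noteq> id" for p
  proof -
    have "\<exists>\<alpha>. \<alpha> \<noteq> i \<and> p \<alpha> \<noteq> \<alpha>"
    proof (cases "p i = i")
      case True
      then show ?thesis
        using p(2) by (metis eq_id_iff)
    next
      case False
      then have "p (p i) \<noteq> p i"
        using permutes_inj[OF p(1)] by (metis injD)
      then show ?thesis
        using False by metis
    qed
    then show ?thesis
      using offdiag by (metis UNIV_I finite prod_zero)
  qed
  then have "det A = (\<Sum>p\<in>{id}. of_int (sign p) * (\<Prod>\<alpha>\<in>UNIV. A$\<alpha>$p \<alpha>))"
    unfolding det_def by (intro sum.mono_neutral_right) (auto simp: permutes_id)
  then show ?thesis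
    by (simp add: sign_id)
qed

lemma det_ma_matrix_axis:
  fixes P :: "real^'n::finite \<Rightarrow> real"
  assumes x: "x = axis i t"
  shows "det (\<chi> \<alpha> \<beta>. (P x * pd \<alpha> (pd \<beta> P) x - pd \<alpha> P x * pd \<beta> P x) * x$\<alpha>
                    + P x * pd \<alpha> P x * (if \<alpha> = \<beta> then 1 else 0))
    = ((P x * pd i (pd i P) x - pd i P x * pd i P x) * t + P x * pd i P x)
      * (\<Prod>\<alpha>\<in>UNIV - {i}. P x * pd \<alpha> P x)"
  (is "det ?M = _")
proof -
  have x0: "x$\<alpha> = 0" if "\<alpha> \<noteq> i" for \<alpha>
    using that by (simp add: x axis_def)
  have "det ?M = (\<Prod>\<alpha>\<in>UNIV. ?M$\<alpha>$\<alpha>)"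
    by (rule det_eq_prod_diag_if_offdiag_in_row[where i = i]) (simp add: x0)
  also have "\<dots> = ?M$i$i * (\<Prod>\<alpha>\<in>UNIV - {i}. ?M$\<alpha>$\<alpha>)"
    by (rule prod.remove) simp_all
  also have "(\<Prod>\<alpha>\<in>UNIV - {i}. ?M$\<alpha>$\<alpha>) = (\<Prod>\<alpha>\<in>UNIV - {i}. P x * pd \<alpha> P x)"
    by (rule prod.cong) (simp_all add: x0)
  finally show ?thesis
    by (simp add: x)
qed

lemma ma_equation_on_axis:
  fixes S :: "('n::finite \<Rightarrow> nat) set" and a :: "('n \<Rightarrow> nat) \<Rightarrow> real"
  defines "P \<equiv> mpoly_eval S a"
  assumes eq: "\<And>x::real^'n.
       det (\<chi> \<alpha> \<beta>. (P x * pd \<alpha> (pd \<beta> P) x - pd \<alpha> P x * pd \<beta> P x) * x$\<alpha>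
                      + P x * pd \<alpha> P x * (if \<alpha> = \<beta> then 1 else 0))
         / P x ^ (CARD('n) - 1) = P x ^ CARD('n)"
    and f: "var_coeff S a i (\<lambda>_. 0) \<noteq> 0"
  shows "ma_diag (var_coeff S a i (\<lambda>_. 0)) * (\<Prod>j\<in>UNIV - {i}. var_coeff S a i ((\<lambda>_. 0)(j := 1)))
    = var_coeff S a i (\<lambda>_. 0) ^ CARD('n)"
proof (rule poly_eqI_off_roots[OF f])
  fix t
  assume nz: "poly (var_coeff S a i (\<lambda>_. 0)) t \<noteq> 0"
  define x where "x = axis i t"
  have Px: "P x = poly (var_coeff S a i (\<lambda>_. 0)) t"
    by (simp add: P_def x_def mpoly_eval_axis)
  have diag: "(P x * pd i (pd i P) x - pd i P x * pd i P x) * t + P x * pd i P x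
    = poly (ma_diag (var_coeff S a i (\<lambda>_. 0))) t"
    by (simp add: P_def x_def mpoly_eval_axis pd_mpoly_eval_axis pd_pd_mpoly_eval_axis ma_diag_def algebra_simps)
  have "(\<Prod>\<alpha>\<in>UNIV - {i}. P x * pd \<alpha> P x)
      = (\<Prod>\<alpha>\<in>UNIV - {i}. P x * poly (var_coeff S a i ((\<lambda>_. 0)(\<alpha> := 1))) t)"
    by (rule prod.cong) (simp_all add: P_def x_def pd_mpoly_eval_axis_other)
  also have "\<dots> = P x ^ (CARD('n) - 1) * poly (\<Prod>j\<in>UNIV - {i}. var_coeff S a i ((\<lambda>_. 0)(j := 1))) t"
    by (simp add: prod.distrib poly_prod card_Diff_singleton)
  finally have prod: "(\<Prod>\<alpha>\<in>UNIV - {i}. P x * pd \<alpha> P x)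
      = P x ^ (CARD('n) - 1) * poly (\<Prod>j\<in>UNIV - {i}. var_coeff S a i ((\<lambda>_. 0)(j := 1))) t" .
  have "det (\<chi> \<alpha> \<beta>. (P x * pd \<alpha> (pd \<beta> P) x - pd \<alpha> P x * pd \<beta> P x) * x$\<alpha>
                      + P x * pd \<alpha> P x * (if \<alpha> = \<beta> then 1 else 0))
    = poly (ma_diag (var_coeff S a i (\<lambda>_. 0))) t
      * (P x ^ (CARD('n) - 1) * poly (\<Prod>j\<in>UNIV - {i}. var_coeff S a i ((\<lambda>_. 0)(j := 1))) t)"
    unfolding det_ma_matrix_axis[OF x_def] diag prod ..
  with eq[of x] nz Px show "poly (ma_diag (var_coeff S a i (\<lambda>_. 0))
      * (\<Prod>j\<in>UNIV - {i}. var_coeff S a i ((\<lambda>_. 0)(j := 1)))) t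
    = poly (var_coeff S a i (\<lambda>_. 0) ^ CARD('n)) t"
    by (simp add: poly_power field_simps)
qed

lemma axis_restrictions_binomial_powers:
  fixes S :: "('n::finite \<Rightarrow> nat) set" and a :: "('n \<Rightarrow> nat) \<Rightarrow> real"
  defines "P \<equiv> mpoly_eval S a"
  assumes n2: "CARD('n) \<ge> 2"
    and finS: "finite S"
    and lowS: "\<And>I. mdeg I \<le> 1 \<Longrightarrow> I \<in> S"
    and alow: "\<And>I. mdeg I \<le> 1 \<Longrightarrow> a I = 1"
    and eq: "\<And>x::real^'n.
       det (\<chi> \<alpha> \<beta>. (P x * pd \<alpha> (pd \<beta> P) x - pd \<alpha> P x * pd \<beta> P x) * x$\<alpha>
                      + P x * pd \<alpha> P x * (if \<alpha> = \<beta> then 1 else 0))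
         / P x ^ (CARD('n) - 1) = P x ^ CARD('n)"
  shows "\<exists>k h. k > 0 \<and> var_coeff S a i (\<lambda>_. 0) = [:1, 1 / real k:] ^ k
    \<and> (\<forall>j. j \<noteq> i \<longrightarrow> var_coeff S a i ((\<lambda>_. 0)(j := 1)) = [:1, 1 / real k:] ^ h j)
    \<and> (\<Sum>j\<in>UNIV - {i}. h j) = k * (CARD('n) - 2) + 2"
proof -
  let ?f = "var_coeff S a i (\<lambda>_. 0)"
  have low: "(\<lambda>_. 0)(j := m) \<in> S \<and> a ((\<lambda>_. 0)(j := m)) = 1" if "m \<le> 1" for j m
    using lowS alow that by (simp add: mdeg_single)
  have f0: "poly ?f 0 = 1"
    using low[of 0 i] by (simp add: poly_0_coeff_0 coeff_var_coeff[OF finS])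
  have f'0: "poly (pderiv ?f) 0 = 1"
    using low[of 1 i] by (simp add: poly_0_coeff_0 coeff_pderiv coeff_var_coeff[OF finS])
  have g0: "poly (var_coeff S a i ((\<lambda>_. 0)(j := 1))) 0 = 1" if "j \<in> UNIV - {i}" for j
    using low[of 1 j] that by (simp add: poly_0_coeff_0 coeff_var_coeff[OF finS] fun_upd_idem)
  have card: "Suc (card (UNIV - {i})) = CARD('n)"
    by (simp add: card_Diff_singleton)
  have "UNIV - {i} \<noteq> {}"
  proof
    assume "UNIV - {i} = {}"
    with card n2 show False
      by simp
  qed
  have eq_axis: "ma_diag ?f * (\<Prod>j\<in>UNIV - {i}. var_coeff S a i ((\<lambda>_. 0)(j := 1)))
      = ?f ^ Suc (card (UNIV - {i}))"
    unfolding card using f0 by (intro ma_equation_on_axis[OF eq[unfolded P_def]]) auto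
  have "card (UNIV - {i}) - 1 = CARD('n) - 2"
    by (simp add: card_Diff_singleton)
  show ?thesis
  proof (rule binomial_powers_if_ma_diag_mult_prod_eq_power[OF finite \<open>UNIV - {i} \<noteq> {}\<close> f0 f'0 g0 eq_axis])
    fix k h
    assume "k > 0" "?f = [:1, 1 / real k:] ^ k"
      and "\<And>j. j \<in> UNIV - {i} \<Longrightarrow> var_coeff S a i ((\<lambda>_. 0)(j := 1)) = [:1, 1 / real k:] ^ h j"
      and "(\<Sum>j\<in>UNIV - {i}. h j) = k * (card (UNIV - {i}) - 1) + 2"
    with \<open>card (UNIV - {i}) - 1 = CARD('n) - 2\<close> show ?thesis
      by auto
  qed
qed

theorem lemma7:
  fixes S :: "('n::finite \<Rightarrow> nat) set" and a :: "('n \<Rightarrow> nat) \<Rightarrow> real"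
  defines "P \<equiv> mpoly_eval S a"
  assumes n2: "CARD('n) \<ge> 2"
    and finS: "finite S"
    and lowS: "\<And>I. mdeg I \<le> 1 \<Longrightarrow> I \<in> S"
    and apos: "\<And>I. I \<in> S \<Longrightarrow> a I > 0"
    and alow: "\<And>I. mdeg I \<le> 1 \<Longrightarrow> a I = 1"
    and eq: "\<And>x::real^'n.
       det (\<chi> \<alpha> \<beta>. (P x * pd \<alpha> (pd \<beta> P) x - pd \<alpha> P x * pd \<beta> P x) * x$\<alpha>
                      + P x * pd \<alpha> P x * (if \<alpha> = \<beta> then 1 else 0))
         / P x ^ (CARD('n) - 1) = P x ^ CARD('n)"
  shows "\<exists>k :: 'n \<Rightarrow> nat. \<exists>h :: 'n \<Rightarrow> 'n \<Rightarrow> nat.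
     (\<forall>i. k i > 0
        \<and> (\<forall>t::real. P (axis i t) = (1 + t / real (k i)) ^ k i)
        \<and> (\<forall>j. j \<noteq> i \<longrightarrow> (\<forall>t::real. pd j P (axis i t) = (1 + t / real (k i)) ^ h i j))
        \<and> (\<Sum>\<alpha>\<in>UNIV - {i}. h i \<alpha>) = k i * (CARD('n) - 2) + 2)
   \<and> (\<forall>i j. i \<noteq> j \<longrightarrow> real (h i j) / real (k i) = real (h j i) / real (k j))"
proof -
  from axis_restrictions_binomial_powers[OF n2 finS lowS alow eq[unfolded P_def]]
  obtain k h where kh: "\<And>i. k i > 0 \<and> var_coeff S a i (\<lambda>_. 0) = [:1, 1 / real (k i):] ^ k i
      \<and> (\<forall>j. j \<noteq> i \<longrightarrow> var_coeff S a i ((\<lambda>_. 0)(j := 1)) = [:1, 1 / real (k i):] ^ h i j)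
      \<and> (\<Sum>j\<in>UNIV - {i}. h i j) = k i * (CARD('n) - 2) + 2"
    by metis
  have slope: "coeff (var_coeff S a i ((\<lambda>_. 0)(j := 1))) 1 = real (h i j) / real (k i)"
    if "j \<noteq> i" for i j
    using kh[of i] that coeff_1_linear_power[of "1 / real (k i)" "h i j"] by simp
  show ?thesis
  proof (intro exI conjI allI impI)
    fix i j :: 'n and t :: real
    show "k i > 0" and "(\<Sum>\<alpha>\<in>UNIV - {i}. h i \<alpha>) = k i * (CARD('n) - 2) + 2"
      using kh by blast+
    show "P (axis i t) = (1 + t / real (k i)) ^ k i"
      using kh[of i] by (simp add: P_def mpoly_eval_axis poly_power)
    assume "j \<noteq> i"
    then show "pd j P (axis i t) = (1 + t / real (k i)) ^ h i j"
      using kh[of i] by (simp add: P_def pd_mpoly_eval_axis_other poly_power)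
  next
    fix i j :: 'n
    assume "i \<noteq> j"
    then show "real (h i j) / real (k i) = real (h j i) / real (k j)"
      using coeff_1_var_coeff_sym[OF finS] slope[of j i] slope[of i j] by simp
  qed
qed

end
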